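(* Let $n\geq1$ be an integer, $p>1$, $q=pe^{2\pi i/n}$, and let $A=\{a_1,\dots,a_m\}\subset\mathbb R$ with $a_1<a_2<\cdots<a_m$. Let $X_{n,p}=\{\sum_{k=0}^{n-1}x_kq^k\mid x_k\in\{0,1\}\}$ and $P_{n,p}=\mathrm{conv}(X_{n,p})$. If $$\max_{i=1,\dots,m-1}(a_{i+1}-a_i)\leq\frac{\max A-\min A}{p^n-1},$$ then every $$x\in\frac{\max A-\min A}{p^n-1}\,P_{n,p}+\frac{1}{p^n-1}\sum_{k=0}^{n-1}(\min A)\,q^k$$ has a representation in base $q$ with alphabet $A$, i.e. there is a sequence $(x_j)_{j\geq1}$ with $x_j\in A$ and $x=\sum_{j=1}^\infty x_jq^{-j}$.
   Context: $\mathrm{conv}$ denotes convex hull in $\mathbb C\cong\mathbb R^2$; for $Y\subset\mathbb C$, $c\in\mathbb R$, $d\in\mathbb C$: $cY+d=\{cy+d\mid y\in Y\}$. *)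

theory Defs
  imports "HOL-Analysis.Analysis"
begin

definition qbase :: "nat \<Rightarrow> real \<Rightarrow> complex" where
  "qbase n p = complex_of_real p * exp (2 * of_real pi * \<i> / of_nat n)"

definition Xset :: "nat \<Rightarrow> real \<Rightarrow> complex set" where
  "Xset n p = {(\<Sum>k<n. complex_of_real (x k) * (qbase n p) ^ k) | x. \<forall>k<n. x k \<in> {0, 1}}"

definition Pset :: "nat \<Rightarrow> real \<Rightarrow> complex set" where
  "Pset n p = convex hull (Xset n p)"

definition has_rep :: "complex \<Rightarrow> real set \<Rightarrow> complex \<Rightarrow> bool" where
  "has_rep q A x \<longleftrightarrow> (\<exists>d :: nat \<Rightarrow> real. (\<forall>j\<ge>1. d j \<in> A) \<and>
      (\<lambda>j. complex_of_real (d (Suc j)) * inverse q ^ (Suc j)) sums x)"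

end

theory Submission
  imports Defs
begin

text \<open>
  Put \<open>s = p^n - 1\<close>, so that \<open>q^n = s + 1\<close> is real, and let \<open>K\<close> be the set of all sums
  \<open>\<Sum>k<n. v k * q^k\<close> with real coefficients \<open>v k \<in> [Min A / s, Max A / s]\<close>; it is bounded
  and contains the given set. Multiplying by \<open>q\<close> shifts the coefficients up by one place and
  moves the top one to place \<open>0\<close> as \<open>(s + 1) * v (n - 1)\<close>; the gap condition provides a digit
  \<open>d \<in> A\<close> bringing \<open>(s + 1) * v (n - 1) - d\<close> back into the interval, so that \<open>q z - d \<in> K\<close>
  for every \<open>z \<in> K\<close>. Iterating \<open>z \<mapsto> q z - d\<close> inside \<open>K\<close> yields digits \<open>d j\<close> with
  \<open>z - (\<Sum>j\<le>N. d j * q^-j) = q^-N * z\<^sub>N \<rightarrow> 0\<close>.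
\<close>

lemma Min_image_strict_mono_on:
  fixes a :: "nat \<Rightarrow> 'a::linorder"
  assumes "strict_mono_on {1..m} a" "1 \<le> m"
  shows "Min (a ` {1..m}) = a 1"
proof (rule Min_eqI)
  show "a 1 \<le> y" if "y \<in> a ` {1..m}" for y
    using that strict_mono_on_imp_mono_on[OF assms(1)] assms(2) by (auto simp: mono_on_def)
qed (use assms(2) in auto)

lemma exists_digit_in_window:
  fixes a :: "nat \<Rightarrow> real"
  assumes mono: "strict_mono_on {1..m} a" and "1 \<le> m"
    and gap: "\<forall>i\<in>{1..<m}. a (i + 1) - a i \<le> h"
    and below_Max: "\<alpha> \<le> Max (a ` {1..m})" and above_Min: "Min (a ` {1..m}) \<le> \<alpha> + h"
  shows "\<exists>g\<in>a ` {1..m}. \<alpha> \<le> g \<and> g \<le> \<alpha> + h"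
proof -
  have "Max (a ` {1..m}) \<in> a ` {1..m}"
    using \<open>1 \<le> m\<close> by (intro Max_in) auto
  then obtain i where "i \<in> {1..m}" "\<alpha> \<le> a i"
    using below_Max by auto
  define j where "j = (LEAST j. j \<in> {1..m} \<and> \<alpha> \<le> a j)"
  have j: "j \<in> {1..m}" "\<alpha> \<le> a j"
    using LeastI[of "\<lambda>j. j \<in> {1..m} \<and> \<alpha> \<le> a j" i] \<open>i \<in> {1..m}\<close> \<open>\<alpha> \<le> a i\<close>
    unfolding j_def by auto
  have "a j \<le> \<alpha> + h"
  proof (cases "j = 1")
    case True
    then show ?thesis
      using above_Min Min_image_strict_mono_on[OF mono \<open>1 \<le> m\<close>] by simp
  next
    case False
    with j have "j - 1 \<in> {1..<m}" by auto
    moreover from this have "a (j - 1) < \<alpha>"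
      using not_less_Least[of "j - 1" "\<lambda>j. j \<in> {1..m} \<and> \<alpha> \<le> a j"] False j_def by fastforce
    ultimately show ?thesis
      using gap False j(1) by fastforce
  qed
  with j show ?thesis by blast
qed

lemma exists_digit_shift_in_range:
  fixes a :: "nat \<Rightarrow> real" and A :: "real set"
  assumes "strict_mono_on {1..m} a" "1 \<le> m" "A = a ` {1..m}" "0 < s"
    and "\<forall>i\<in>{1..<m}. a (i + 1) - a i \<le> (Max A - Min A) / s"
    and t: "t \<in> {Min A / s..Max A / s}"
  shows "\<exists>d\<in>A. (s + 1) * t - d \<in> {Min A / s..Max A / s}"
proof -
  define \<alpha> where "\<alpha> = (s + 1) * t - Max A / s"
  have "s * t \<le> Max A" "Min A \<le> s * t"
    using t \<open>0 < s\<close> by (simp_all add: field_simps)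
  then have "(s + 1) * (s * t) \<le> (s + 1) * Max A" "(s + 1) * Min A \<le> (s + 1) * (s * t)"
    using \<open>0 < s\<close> by simp_all
  then have "\<alpha> \<le> Max A" "Min A \<le> (s + 1) * t - Min A / s"
    using \<open>0 < s\<close> by (simp_all add: \<alpha>_def field_simps)
  moreover have "\<alpha> + (Max A - Min A) / s = (s + 1) * t - Min A / s"
    by (simp add: \<alpha>_def diff_divide_distrib)
  ultimately have "\<alpha> \<le> Max A" "Min A \<le> \<alpha> + (Max A - Min A) / s"
    by simp_all
  then obtain d where "d \<in> A" "\<alpha> \<le> d" "d \<le> \<alpha> + (Max A - Min A) / s"
    using exists_digit_in_window[OF assms(1,2), of "(Max A - Min A) / s" \<alpha>] assms(5)
    unfolding assms(3) by blast
  then have "(s + 1) * t - d \<in> {Min A / s..Max A / s}"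
    by (simp add: \<alpha>_def diff_divide_distrib)
  with \<open>d \<in> A\<close> show ?thesis by blast
qed

definition coeff_box :: "complex \<Rightarrow> nat \<Rightarrow> real \<Rightarrow> real \<Rightarrow> complex set" where
  "coeff_box q n lo hi = {(\<Sum>k<n. of_real (v k) * q ^ k) | v. \<forall>k<n. v k \<in> {lo..hi}}"

lemma coeff_boxI: "\<forall>k<n. v k \<in> {lo..hi} \<Longrightarrow> (\<Sum>k<n. of_real (v k) * q ^ k) \<in> coeff_box q n lo hi"
  unfolding coeff_box_def by blast

lemma coeff_boxE:
  assumes "z \<in> coeff_box q n lo hi"
  obtains v where "z = (\<Sum>k<n. of_real (v k) * q ^ k)" "\<forall>k<n. v k \<in> {lo..hi}"
  using assms unfolding coeff_box_def by blast

lemma convex_coeff_box: "convex (coeff_box q n lo hi)"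
  unfolding convex_def
proof (intro ballI allI impI)
  fix x y and u w :: real
  assume "x \<in> coeff_box q n lo hi" "y \<in> coeff_box q n lo hi" and uw: "0 \<le> u" "0 \<le> w" "u + w = 1"
  obtain v where x: "x = (\<Sum>k<n. of_real (v k) * q ^ k)" "\<forall>k<n. v k \<in> {lo..hi}"
    using \<open>x \<in> coeff_box q n lo hi\<close> by (rule coeff_boxE)
  obtain v' where y: "y = (\<Sum>k<n. of_real (v' k) * q ^ k)" "\<forall>k<n. v' k \<in> {lo..hi}"
    using \<open>y \<in> coeff_box q n lo hi\<close> by (rule coeff_boxE)
  have "\<forall>k<n. u * v k + w * v' k \<in> {lo..hi}"
  proof (intro allI impI)
    fix k assume "k < n"
    then have "v k \<in> {lo..hi}" "v' k \<in> {lo..hi}"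
      using x(2) y(2) by auto
    from convexD[OF convex_real_interval(5) this uw] show "u * v k + w * v' k \<in> {lo..hi}"
      by simp
  qed
  then have "(\<Sum>k<n. of_real (u * v k + w * v' k) * q ^ k) \<in> coeff_box q n lo hi"
    by (rule coeff_boxI)
  moreover have "u *\<^sub>R x + w *\<^sub>R y
      = (\<Sum>k<n. of_real u * (of_real (v k) * q ^ k)) + (\<Sum>k<n. of_real w * (of_real (v' k) * q ^ k))"
    by (simp add: x y scaleR_conv_of_real sum_distrib_left)
  moreover have "\<dots> = (\<Sum>k<n. of_real (u * v k + w * v' k) * q ^ k)"
    by (simp add: sum.distrib[symmetric] distrib_right mult.assoc)
  ultimately show "u *\<^sub>R x + w *\<^sub>R y \<in> coeff_box q n lo hi"
    by simp
qed

lemma bounded_coeff_box: "bounded (coeff_box q n lo hi)"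
proof -
  have "norm z \<le> (\<Sum>k<n. (\<bar>lo\<bar> + \<bar>hi\<bar>) * norm q ^ k)" if "z \<in> coeff_box q n lo hi" for z
  proof -
    obtain v where z: "z = (\<Sum>k<n. of_real (v k) * q ^ k)" and v: "\<forall>k<n. v k \<in> {lo..hi}"
      using \<open>z \<in> coeff_box q n lo hi\<close> by (rule coeff_boxE)
    have "norm z \<le> (\<Sum>k<n. norm (of_real (v k) * q ^ k))"
      unfolding z by (rule norm_sum)
    also have "\<dots> \<le> (\<Sum>k<n. (\<bar>lo\<bar> + \<bar>hi\<bar>) * norm q ^ k)"
    proof (rule sum_mono)
      fix k assume "k \<in> {..<n}"
      then have "\<bar>v k\<bar> \<le> \<bar>lo\<bar> + \<bar>hi\<bar>" using v by auto
      then show "norm (of_real (v k) * q ^ k) \<le> (\<bar>lo\<bar> + \<bar>hi\<bar>) * norm q ^ k"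
        by (simp add: norm_mult norm_power mult_right_mono)
    qed
    finally show ?thesis .
  qed
  then show ?thesis unfolding bounded_iff by blast
qed

lemma Pset_subset_coeff_box: "Pset n p \<subseteq> coeff_box (qbase n p) n 0 1"
  unfolding Pset_def
proof (rule hull_minimal)
  show "Xset n p \<subseteq> coeff_box (qbase n p) n 0 1"
    unfolding Xset_def coeff_box_def by force
qed (rule convex_coeff_box)

lemma affine_image_coeff_box:
  assumes "0 \<le> c" "z \<in> coeff_box q n 0 1"
  shows "of_real c * z + (\<Sum>k<n. of_real lo * q ^ k) \<in> coeff_box q n lo (lo + c)"
proof -
  obtain t where z: "z = (\<Sum>k<n. of_real (t k) * q ^ k)" and t: "\<forall>k<n. t k \<in> {0..1}"
    using assms(2) by (rule coeff_boxE)
  have "\<forall>k<n. lo + c * t k \<in> {lo..lo + c}"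
    using t \<open>0 \<le> c\<close> by (auto simp: mult_left_le)
  then have "(\<Sum>k<n. of_real (lo + c * t k) * q ^ k) \<in> coeff_box q n lo (lo + c)"
    by (rule coeff_boxI)
  moreover have "of_real c * z + (\<Sum>k<n. of_real lo * q ^ k) = (\<Sum>k<n. of_real (lo + c * t k) * q ^ k)"
    by (simp add: z sum_distrib_left sum.distrib algebra_simps)
  ultimately show ?thesis
    by simp
qed

lemma sum_powers_times_base:
  fixes q :: complex
  assumes "q ^ n = of_real r" "1 \<le> n"
  shows "q * (\<Sum>k<n. of_real (v k) * q ^ k) - of_real c
       = (\<Sum>k<n. of_real (if k = 0 then r * v (n - 1) - c else v (k - 1)) * q ^ k)"
proof -
  obtain n' where n: "n = Suc n'" using assms(2) by (cases n) auto
  define T where "T = (\<Sum>k<n'. of_real (v k) * q ^ Suc k)"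
  have "q * (\<Sum>k<n. of_real (v k) * q ^ k) - of_real c = T + of_real (v n') * q ^ n - of_real c"
    by (simp add: T_def n sum_distrib_left distrib_left mult_ac)
  also have "\<dots> = of_real (r * v n' - c) + T"
    by (simp add: assms(1))
  also have "\<dots> = (\<Sum>k<n. of_real (if k = 0 then r * v (n - 1) - c else v (k - 1)) * q ^ k)"
    by (simp add: T_def n sum.lessThan_Suc_shift del: sum.lessThan_Suc)
  finally show ?thesis .
qed

lemma coeff_box_self_covering:
  assumes "q ^ n = of_real r" "1 \<le> n"
    and digit: "\<And>t. t \<in> {lo..hi} \<Longrightarrow> \<exists>d\<in>D. r * t - d \<in> {lo..hi}"
    and "z \<in> coeff_box q n lo hi"
  shows "\<exists>d\<in>D. q * z - of_real d \<in> coeff_box q n lo hi"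
proof -
  obtain v where z: "z = (\<Sum>k<n. of_real (v k) * q ^ k)" and v: "\<forall>k<n. v k \<in> {lo..hi}"
    using assms(4) by (rule coeff_boxE)
  obtain d where "d \<in> D" and d: "r * v (n - 1) - d \<in> {lo..hi}"
    using digit v \<open>1 \<le> n\<close> by (meson diff_less zero_less_one less_le_trans)
  have "\<forall>k<n. (if k = 0 then r * v (n - 1) - d else v (k - 1)) \<in> {lo..hi}"
    using v d by auto
  then have "q * z - of_real d \<in> coeff_box q n lo hi"
    unfolding z sum_powers_times_base[OF assms(1,2)] by (rule coeff_boxI)
  with \<open>d \<in> D\<close> show ?thesis by blast
qed

lemma has_rep_if_self_covering:
  fixes q :: complex and K :: "complex set"
  assumes "bounded K" "1 < norm q"
    and step: "\<And>w. w \<in> K \<Longrightarrow> \<exists>d\<in>A. q * w - of_real d \<in> K"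
    and "z \<in> K"
  shows "has_rep q A z"
proof -
  obtain digit where digit: "\<And>w. w \<in> K \<Longrightarrow> digit w \<in> A \<and> q * w - of_real (digit w) \<in> K"
    using step by metis
  define orbit where "orbit N = ((\<lambda>w. q * w - of_real (digit w)) ^^ N) z" for N
  define d where "d j = digit (orbit (j - 1))" for j
  have orbit_0: "orbit 0 = z"
    by (simp add: orbit_def)
  have orbit_Suc: "orbit (Suc N) = q * orbit N - of_real (d (Suc N))" for N
    by (simp add: orbit_def d_def)
  have orbit_in: "orbit N \<in> K" for N
    by (induction N) (simp_all add: orbit_0 orbit_Suc d_def \<open>z \<in> K\<close> digit)
  have "q \<noteq> 0" using assms(2) by auto
  have partial_sum: "z = (\<Sum>j<N. of_real (d (Suc j)) * inverse q ^ Suc j) + inverse q ^ N * orbit N" for N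
  proof (induction N)
    case 0
    show ?case by (simp add: orbit_0)
  next
    case (Suc N)
    have "orbit N = inverse q * (of_real (d (Suc N)) + orbit (Suc N))"
      using \<open>q \<noteq> 0\<close> by (simp add: orbit_Suc)
    with Suc show ?case by (simp add: algebra_simps)
  qed
  obtain B where B: "\<And>w. w \<in> K \<Longrightarrow> norm w \<le> B"
    using \<open>bounded K\<close> unfolding bounded_iff by blast
  have "(\<lambda>N. inverse q ^ N * orbit N) \<longlonglongrightarrow> 0"
  proof (rule Lim_null_comparison)
    show "\<forall>\<^sub>F N in sequentially. norm (inverse q ^ N * orbit N) \<le> inverse (norm q) ^ N * B"
    proof (intro always_eventually allI)
      fix N
      have "norm (inverse q ^ N * orbit N) = inverse (norm q) ^ N * norm (orbit N)"
        by (simp add: norm_mult norm_power norm_inverse)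
      also have "\<dots> \<le> inverse (norm q) ^ N * B"
        by (intro mult_left_mono B orbit_in) simp
      finally show "norm (inverse q ^ N * orbit N) \<le> inverse (norm q) ^ N * B" .
    qed
    show "(\<lambda>N. inverse (norm q) ^ N * B) \<longlonglongrightarrow> 0"
      using assms(2) by (intro tendsto_mult_left_zero LIMSEQ_power_zero) (simp_all add: inverse_less_1_iff)
  qed
  then have "(\<lambda>N. z - inverse q ^ N * orbit N) \<longlonglongrightarrow> z - 0"
    by (intro tendsto_diff tendsto_const)
  moreover have "z - inverse q ^ N * orbit N = (\<Sum>j<N. of_real (d (Suc j)) * inverse q ^ Suc j)" for N
    using partial_sum[of N] by simp
  ultimately have "(\<lambda>N. \<Sum>j<N. of_real (d (Suc j)) * inverse q ^ Suc j) \<longlonglongrightarrow> z"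
    by simp
  moreover have "\<forall>j\<ge>1. d j \<in> A"
    using digit orbit_in by (simp add: d_def)
  ultimately show ?thesis
    unfolding has_rep_def sums_def by blast
qed

lemma qbase_power: "1 \<le> n \<Longrightarrow> qbase n p ^ n = of_real (p ^ n)"
proof -
  assume "1 \<le> n"
  have "exp (2 * of_real pi * \<i> / of_nat n) ^ n = exp (of_nat n * (2 * of_real pi * \<i> / of_nat n))"
    by (simp only: exp_of_nat_mult)
  also have "\<dots> = 1"
    using \<open>1 \<le> n\<close> by simp
  finally show ?thesis
    by (simp add: qbase_def power_mult_distrib)
qed

lemma norm_qbase: "norm (qbase n p) = \<bar>p\<bar>"
  by (simp add: qbase_def norm_mult)

theorem corollary4p7:
  fixes n m :: nat and p :: real and a :: "nat \<Rightarrow> real" and A :: "real set"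
  assumes "n \<ge> 1" and "p > 1" and "m \<ge> 1"
    and "strict_mono_on {1..m} a"
    and "A = a ` {1..m}"
    and "\<forall>i\<in>{1..<m}. a (i + 1) - a i \<le> (Max A - Min A) / (p ^ n - 1)"
    and "x \<in> (\<lambda>y. complex_of_real ((Max A - Min A) / (p ^ n - 1)) * y
              + complex_of_real (1 / (p ^ n - 1)) * (\<Sum>k<n. complex_of_real (Min A) * (qbase n p) ^ k))
            ` Pset n p"
  shows "has_rep (qbase n p) A x"
proof -
  define q where "q = qbase n p"
  define s where "s = p ^ n - 1"
  define K where "K = coeff_box q n (Min A / s) (Max A / s)"
  have "0 < s"
    using assms(1,2) by (simp add: s_def one_less_power)
  have "finite A" "A \<noteq> {}"
    using assms(3,5) by auto
  then have width: "0 \<le> (Max A - Min A) / s"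
    using \<open>0 < s\<close> by (simp add: Min_le)
  obtain y where "y \<in> Pset n p"
    and x: "x = of_real ((Max A - Min A) / s) * y + of_real (1 / s) * (\<Sum>k<n. of_real (Min A) * q ^ k)"
    using assms(7) unfolding q_def s_def by blast
  then have "y \<in> coeff_box q n 0 1"
    using Pset_subset_coeff_box unfolding q_def by blast
  from affine_image_coeff_box[OF width this, of "Min A / s"]
  have "x \<in> K"
    by (simp add: x K_def sum_distrib_left diff_divide_distrib)
  moreover have "\<exists>d\<in>A. q * z - of_real d \<in> K" if "z \<in> K" for z
    unfolding K_def
  proof (rule coeff_box_self_covering[of q n "s + 1"])
    show "q ^ n = of_real (s + 1)"
      using qbase_power[OF assms(1)] by (simp add: q_def s_def)
    show "\<exists>d\<in>A. (s + 1) * t - d \<in> {Min A / s..Max A / s}" if "t \<in> {Min A / s..Max A / s}" for t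
      using exists_digit_shift_in_range[OF assms(4,3,5) \<open>0 < s\<close> _ that] assms(6) by (simp add: s_def)
  qed (use assms(1) that in \<open>simp_all add: K_def\<close>)
  moreover have "bounded K" "1 < norm q"
    using bounded_coeff_box norm_qbase assms(2) by (auto simp: K_def q_def)
  ultimately show ?thesis
    using has_rep_if_self_covering unfolding q_def by blast
qed

end
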